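(* Let $p>1$ and let $\mathbf f^*$ be the optimal solution to the minimum weighted $p$-norm flow problem. Then $\mathcal E(\mathbf f^* )\le\frac1pn\|\mathbf r\|_\infty\|\mathbf b\|_1^p$. In addition, for all $(i,j)\in\vec E$, $|f^*(i,j)|\le(nR)^{\frac1p}\|\mathbf b\|_1$, which implies that $|x^*(i)-x^*(j)|\le r(i,j)(nR)^{\frac{p-1}p}\|\mathbf b\|_1^{p-1}$ for all $(i,j)\in\vec E$.
   Context: $G=(V,E)$ is a connected undirected graph with $n$ vertices, weights $r(e)>0$, $R=\max_er(e)/\min_er(e)$, $\|\mathbf r\|_\infty=\max_er(e)$, and fixed orientation $\vec E$ (with $f(j,i)=-f(i,j)$). $\mathbf b\in\mathbb R^V$ with $\sum_ib(i)=0$; a $\mathbf b$-flow has net outflow $b(i)$ at every vertex $i$. $\mathcal E(\mathbf f)=\frac1p\sum_{e\in\vec E}r(e)|f(e)|^p$ and $\mathbf f^*$ minimizes it over $\mathbf b$-flows. $\mathbf x^*$ is an optimal solution of the dual problem $\max_{\mathbf x}\ \mathbf b^\top\mathbf x-(1-\frac1p)\sum_{(i,j)\in\vec E}\big(|x(i)-x(j)|^p/r(i,j)\big)^{\frac1{p-1}}$; optimal $\mathbf f^*,\mathbf x^*$ satisfy $r(i,j)f^*(i,j)|f^*(i,j)|^{p-2}=x^*(i)-x^*(j)$ for all $(i,j)\in\vec E$. *)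

theory Defs
  imports Complex_Main
begin

text \<open>A graph: finite vertex set V, oriented edge set Ed (each undirected edge
  appears exactly once, as an ordered pair; no self-loops).\<close>

definition oriented_graph :: "'a set \<Rightarrow> ('a \<times> 'a) set \<Rightarrow> bool" where
  "oriented_graph V Ed \<longleftrightarrow> finite V \<and> Ed \<subseteq> V \<times> V \<and>
     (\<forall>i j. (i, j) \<in> Ed \<longrightarrow> i \<noteq> j \<and> (j, i) \<notin> Ed)"

definition connected_graph :: "'a set \<Rightarrow> ('a \<times> 'a) set \<Rightarrow> bool" where
  "connected_graph V Ed \<longleftrightarrow> V \<noteq> {} \<and>
     (\<forall>u\<in>V. \<forall>v\<in>V. (u, v) \<in> (Ed \<union> Ed\<inverse>)\<^sup>*)"

definition net_outflow :: "('a \<times> 'a) set \<Rightarrow> ('a \<times> 'a \<Rightarrow> real) \<Rightarrow> 'a \<Rightarrow> real" where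
  "net_outflow Ed f i = (\<Sum>e\<in>{e\<in>Ed. fst e = i}. f e) - (\<Sum>e\<in>{e\<in>Ed. snd e = i}. f e)"

definition is_b_flow :: "'a set \<Rightarrow> ('a \<times> 'a) set \<Rightarrow> ('a \<Rightarrow> real) \<Rightarrow> ('a \<times> 'a \<Rightarrow> real) \<Rightarrow> bool" where
  "is_b_flow V Ed b f \<longleftrightarrow> (\<forall>i\<in>V. net_outflow Ed f i = b i)"

definition energy :: "real \<Rightarrow> ('a \<times> 'a) set \<Rightarrow> ('a \<times> 'a \<Rightarrow> real) \<Rightarrow> ('a \<times> 'a \<Rightarrow> real) \<Rightarrow> real" where
  "energy p Ed r f = (1 / p) * (\<Sum>e\<in>Ed. r e * \<bar>f e\<bar> powr p)"

definition dual_obj :: "real \<Rightarrow> 'a set \<Rightarrow> ('a \<times> 'a) set \<Rightarrow> ('a \<times> 'a \<Rightarrow> real) \<Rightarrow> ('a \<Rightarrow> real) \<Rightarrow> ('a \<Rightarrow> real) \<Rightarrow> real" where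
  "dual_obj p V Ed r b x = (\<Sum>i\<in>V. b i * x i)
     - (1 - 1 / p) * (\<Sum>(i, j)\<in>Ed. (\<bar>x i - x j\<bar> powr p / r (i, j)) powr (1 / (p - 1)))"

definition r_inf :: "('a \<times> 'a) set \<Rightarrow> ('a \<times> 'a \<Rightarrow> real) \<Rightarrow> real" where
  "r_inf Ed r = Max (r ` Ed)"

definition r_ratio :: "('a \<times> 'a) set \<Rightarrow> ('a \<times> 'a \<Rightarrow> real) \<Rightarrow> real" where
  "r_ratio Ed r = Max (r ` Ed) / Min (r ` Ed)"

definition norm1 :: "'a set \<Rightarrow> ('a \<Rightarrow> real) \<Rightarrow> real" where
  "norm1 V b = (\<Sum>i\<in>V. \<bar>b i\<bar>)"

end

theory Submission
  imports Defs
begin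

text \<open>Fix a root \<open>v\<^sub>0\<close> and grow a spanning tree one edge at a time, keeping for every tree
  vertex \<open>u\<close> a unit flow from \<open>u\<close> to \<open>v\<^sub>0\<close> on tree edges with all values in \<open>[-1, 1]\<close>.
  Superposing these flows with weights \<open>b u\<close> gives a \<open>b\<close>-flow (because \<open>\<Sum>b = 0\<close>) supported on at
  most \<open>n\<close> edges and bounded by \<open>\<parallel>b\<parallel>\<^sub>1\<close>, so its energy, and hence the optimal energy, is at
  most \<open>n \<parallel>r\<parallel>\<^sub>\<infinity> \<parallel>b\<parallel>\<^sub>1\<^sup>p / p\<close>. As \<open>r(e) \<bar>f\<^sup>*(e)\<bar>\<^sup>p\<close> is at most \<open>p\<close> times the optimal energy, this
  bounds the flow on every edge, and the optimality condition
  \<open>\<bar>x\<^sup>*(i) - x\<^sup>*(j)\<bar> = r(i,j) \<bar>f\<^sup>*(i,j)\<bar>\<^sup>p\<^sup>-\<^sup>1\<close> turns this into the bound on potential differences.\<close>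

lemma rtrancl_exit_edge:
  assumes "(x, y) \<in> R\<^sup>*" "x \<in> T" "y \<notin> T"
  shows "\<exists>a c. (a, c) \<in> R \<and> a \<in> T \<and> c \<notin> T"
  using assms by (induction rule: rtrancl_induct) auto

lemma net_outflow_add_edge:
  assumes "finite Ed" "e \<in> Ed"
  shows "net_outflow Ed (\<lambda>e'. f e' + (if e' = e then c else 0)) i
    = net_outflow Ed f i + (if fst e = i then c else 0) - (if snd e = i then c else 0)"
  using assms by (simp add: net_outflow_def sum.distrib)

lemma net_outflow_linear_combination:
  "net_outflow Ed (\<lambda>e. \<Sum>u\<in>U. c u * f u e) i = (\<Sum>u\<in>U. c u * net_outflow Ed (f u) i)"
  unfolding net_outflow_def
  by (simp add: sum_subtractf sum_distrib_left right_diff_distrib sum.swap[of _ U])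

lemma oriented_graph_finite_edges:
  assumes "oriented_graph V Ed"
  shows "finite Ed"
  using assms finite_subset[of Ed "V \<times> V"] by (auto simp: oriented_graph_def)

text \<open>\<open>S\<close> stands for the edges of a tree spanning \<open>T\<close>: of the tree property only
  \<open>card S \<le> card T\<close> is kept, and \<open>S \<subseteq> T \<times> T\<close> makes every edge leaving \<open>T\<close> new.\<close>

definition unit_routing ::
    "('a \<times> 'a) set \<Rightarrow> 'a \<Rightarrow> 'a set \<Rightarrow> ('a \<times> 'a) set \<Rightarrow> ('a \<Rightarrow> 'a \<times> 'a \<Rightarrow> real) \<Rightarrow> bool" where
  "unit_routing Ed v\<^sub>0 T S \<phi> \<longleftrightarrow> v\<^sub>0 \<in> T \<and> S \<subseteq> Ed \<inter> T \<times> T \<and> card S \<le> card T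
     \<and> (\<forall>u\<in>T. \<forall>e. e \<notin> S \<longrightarrow> \<phi> u e = 0)
     \<and> (\<forall>u\<in>T. \<forall>e. \<bar>\<phi> u e\<bar> \<le> 1)
     \<and> (\<forall>u\<in>T. \<forall>i. net_outflow Ed (\<phi> u) i = (if i = u then 1 else 0) - (if i = v\<^sub>0 then 1 else 0))"

lemma unit_routing_root: "unit_routing Ed v\<^sub>0 {v\<^sub>0} {} (\<lambda>_ _. 0)"
  by (simp add: unit_routing_def net_outflow_def)

text \<open>The new flow from \<open>w\<close> pushes its unit across \<open>e\<^sub>0\<close> to \<open>t\<close> and then follows \<open>\<phi> t\<close>.\<close>

lemma unit_routing_insert:
  assumes "finite Ed" "finite T" and routing: "unit_routing Ed v\<^sub>0 T S \<phi>"
    and "t \<in> T" "w \<notin> T" "e\<^sub>0 \<in> Ed" and e\<^sub>0: "e\<^sub>0 = (t, w) \<and> c = -1 \<or> e\<^sub>0 = (w, t) \<and> c = 1"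
  shows "unit_routing Ed v\<^sub>0 (insert w T) (insert e\<^sub>0 S)
    (\<phi>(w := (\<lambda>e. \<phi> t e + (if e = e\<^sub>0 then c else 0))))"
    (is "unit_routing _ _ _ _ ?\<phi>")
proof -
  have v\<^sub>0: "v\<^sub>0 \<in> T" and S: "S \<subseteq> Ed \<inter> T \<times> T" "card S \<le> card T"
    and supp: "\<And>u e. u \<in> T \<Longrightarrow> e \<notin> S \<Longrightarrow> \<phi> u e = 0"
    and bound: "\<And>u e. u \<in> T \<Longrightarrow> \<bar>\<phi> u e\<bar> \<le> 1"
    and flow: "\<And>u i. u \<in> T \<Longrightarrow>
      net_outflow Ed (\<phi> u) i = (if i = u then 1 else 0) - (if i = v\<^sub>0 then 1 else 0)"
    using routing unfolding unit_routing_def by blast+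
  have "e\<^sub>0 \<notin> S" using S(1) \<open>w \<notin> T\<close> e\<^sub>0 by blast
  then have "\<phi> t e\<^sub>0 = 0" using supp \<open>t \<in> T\<close> by blast
  have "net_outflow Ed (?\<phi> u) i = (if i = u then 1 else 0) - (if i = v\<^sub>0 then 1 else 0)"
    if "u \<in> insert w T" for u i
  proof (cases "u = w")
    case True
    then have "net_outflow Ed (?\<phi> u) i
        = net_outflow Ed (\<phi> t) i + (if fst e\<^sub>0 = i then c else 0) - (if snd e\<^sub>0 = i then c else 0)"
      using net_outflow_add_edge[OF \<open>finite Ed\<close> \<open>e\<^sub>0 \<in> Ed\<close>] by simp
    then show ?thesis using flow[OF \<open>t \<in> T\<close>] True e\<^sub>0 \<open>t \<in> T\<close> \<open>w \<notin> T\<close> by auto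
  next
    case False
    with that have "u \<in> T" by simp
    with False show ?thesis by (simp add: flow)
  qed
  moreover have "card (insert e\<^sub>0 S) \<le> card (insert w T)"
  proof -
    have "finite S" using S(1) \<open>finite Ed\<close> finite_subset by blast
    then show ?thesis using S(2) \<open>e\<^sub>0 \<notin> S\<close> \<open>finite T\<close> \<open>w \<notin> T\<close> by simp
  qed
  moreover have "insert e\<^sub>0 S \<subseteq> Ed \<inter> insert w T \<times> insert w T"
    using S(1) \<open>e\<^sub>0 \<in> Ed\<close> e\<^sub>0 \<open>t \<in> T\<close> by auto
  moreover have "?\<phi> u e = 0" if "u \<in> insert w T" "e \<notin> insert e\<^sub>0 S" for u e
    using that \<open>t \<in> T\<close> supp[of t e] supp[of u e] by auto
  moreover have "\<bar>?\<phi> u e\<bar> \<le> 1" if "u \<in> insert w T" for u e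
    using that \<open>t \<in> T\<close> e\<^sub>0 \<open>\<phi> t e\<^sub>0 = 0\<close> bound[of t e] bound[of u e] by auto
  ultimately show ?thesis using v\<^sub>0 by (simp add: unit_routing_def)
qed

lemma unit_routing_grow:
  assumes graph: "oriented_graph V Ed" and conn: "connected_graph V Ed"
    and routing: "unit_routing Ed v\<^sub>0 T S \<phi>" and TV: "T \<subseteq> V" "T \<noteq> V"
  shows "\<exists>w S' \<phi>'. w \<in> V - T \<and> unit_routing Ed v\<^sub>0 (insert w T) S' \<phi>'"
proof -
  have EV: "Ed \<subseteq> V \<times> V" and "finite V" using graph by (auto simp: oriented_graph_def)
  then have "finite T" using TV(1) finite_subset by blast
  have v\<^sub>0: "v\<^sub>0 \<in> T" using routing by (simp add: unit_routing_def)
  obtain y where y: "y \<in> V" "y \<notin> T" using TV by blast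
  have "(v\<^sub>0, y) \<in> (Ed \<union> Ed\<inverse>)\<^sup>*"
    using conn[unfolded connected_graph_def] v\<^sub>0 TV(1) y(1) by (simp add: subset_iff)
  from rtrancl_exit_edge[OF this v\<^sub>0 y(2)]
  obtain t w where tw: "(t, w) \<in> Ed \<union> Ed\<inverse>" "t \<in> T" "w \<notin> T" by blast
  then have w: "w \<in> V - T" using EV by blast
  obtain e\<^sub>0 and c :: real where e\<^sub>0: "e\<^sub>0 \<in> Ed" "e\<^sub>0 = (t, w) \<and> c = -1 \<or> e\<^sub>0 = (w, t) \<and> c = 1"
    using tw(1) by blast
  from w unit_routing_insert[OF oriented_graph_finite_edges[OF graph] \<open>finite T\<close> routing
      tw(2,3) e\<^sub>0]
  show ?thesis by blast
qed

lemma unit_routing_exists: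
  assumes graph: "oriented_graph V Ed" and conn: "connected_graph V Ed" and "v\<^sub>0 \<in> V"
  shows "\<exists>S \<phi>. unit_routing Ed v\<^sub>0 V S \<phi>"
proof -
  have "finite V" using graph by (simp add: oriented_graph_def)
  have "\<exists>S \<phi>. unit_routing Ed v\<^sub>0 V S \<phi>" if "unit_routing Ed v\<^sub>0 T S \<phi>" "T \<subseteq> V" for T S \<phi>
    using that
  proof (induction "card (V - T)" arbitrary: T S \<phi> rule: less_induct)
    case less
    show ?case
    proof (cases "T = V")
      case True
      then show ?thesis using less.prems(1) by blast
    next
      case False
      from unit_routing_grow[OF graph conn less.prems False]
      obtain w S' \<phi>' where w: "w \<in> V - T" and routing: "unit_routing Ed v\<^sub>0 (insert w T) S' \<phi>'"
        by blast
      have "card (V - insert w T) < card (V - T)"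
        using w \<open>finite V\<close> by (intro psubset_card_mono) auto
      moreover have "insert w T \<subseteq> V" using w less.prems(2) by blast
      ultimately show ?thesis using routing by (intro less.hyps)
    qed
  qed
  from this[OF unit_routing_root] show ?thesis using \<open>v\<^sub>0 \<in> V\<close> by blast
qed

lemma ex_b_flow_small_support:
  assumes graph: "oriented_graph V Ed" and conn: "connected_graph V Ed"
    and bsum: "(\<Sum>i\<in>V. b i) = 0"
  shows "\<exists>S g. S \<subseteq> Ed \<and> card S \<le> card V \<and> is_b_flow V Ed b g
    \<and> (\<forall>e. e \<notin> S \<longrightarrow> g e = 0) \<and> (\<forall>e. \<bar>g e\<bar> \<le> norm1 V b)"
proof -
  obtain v\<^sub>0 where "v\<^sub>0 \<in> V" using conn unfolding connected_graph_def by blast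
  then obtain S \<phi> where routing: "unit_routing Ed v\<^sub>0 V S \<phi>"
    using unit_routing_exists[OF graph conn] by blast
  then have S: "S \<subseteq> Ed" "card S \<le> card V"
    and supp: "\<And>u e. u \<in> V \<Longrightarrow> e \<notin> S \<Longrightarrow> \<phi> u e = 0"
    and bound: "\<And>u e. u \<in> V \<Longrightarrow> \<bar>\<phi> u e\<bar> \<le> 1"
    and flow: "\<And>u i. u \<in> V \<Longrightarrow>
      net_outflow Ed (\<phi> u) i = (if i = u then 1 else 0) - (if i = v\<^sub>0 then 1 else 0)"
    unfolding unit_routing_def by blast+
  have "finite V" using graph by (simp add: oriented_graph_def)
  define g where "g = (\<lambda>e. \<Sum>u\<in>V. b u * \<phi> u e)"
  have "net_outflow Ed g i = b i" if "i \<in> V" for i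
  proof -
    have "net_outflow Ed g i = (\<Sum>u\<in>V. b u * ((if i = u then 1 else 0) - (if i = v\<^sub>0 then 1 else 0)))"
      unfolding g_def net_outflow_linear_combination using flow by simp
    also have "\<dots> = (\<Sum>u\<in>V. if u = i then b u else 0) - (if i = v\<^sub>0 then \<Sum>u\<in>V. b u else 0)"
      by (auto simp: right_diff_distrib sum_subtractf intro!: sum.cong)
    finally show ?thesis using \<open>finite V\<close> that bsum by simp
  qed
  moreover have "\<bar>g e\<bar> \<le> norm1 V b" for e
  proof -
    have "\<bar>g e\<bar> \<le> (\<Sum>u\<in>V. \<bar>b u\<bar> * \<bar>\<phi> u e\<bar>)"
      unfolding g_def abs_mult[symmetric] by (rule sum_abs)
    also have "\<dots> \<le> (\<Sum>u\<in>V. \<bar>b u\<bar>)"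
      using bound by (intro sum_mono mult_left_le abs_ge_zero)
    finally show ?thesis by (simp add: norm1_def)
  qed
  moreover have "g e = 0" if "e \<notin> S" for e
    using supp that by (simp add: g_def)
  ultimately show ?thesis using S unfolding is_b_flow_def by blast
qed

lemma norm1_eq_0_if_no_edges:
  assumes "is_b_flow V {} b g"
  shows "norm1 V b = 0"
  using assms by (simp add: is_b_flow_def net_outflow_def norm1_def)

lemma energy_le_card_support:
  assumes "finite Ed" "p > 0" "S \<subseteq> Ed"
    and r: "\<And>e. e \<in> S \<Longrightarrow> 0 \<le> r e \<and> r e \<le> rm"
    and supp: "\<And>e. e \<notin> S \<Longrightarrow> g e = 0" and bound: "\<And>e. \<bar>g e\<bar> \<le> N"
  shows "energy p Ed r g \<le> (1 / p) * card S * rm * N powr p"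
proof -
  have "(\<Sum>e\<in>Ed. r e * \<bar>g e\<bar> powr p) = (\<Sum>e\<in>S. r e * \<bar>g e\<bar> powr p)"
    using assms(1,3) supp by (intro sum.mono_neutral_right) auto
  also have "\<dots> \<le> (\<Sum>e\<in>S. rm * N powr p)"
  proof (rule sum_mono)
    fix e assume "e \<in> S"
    then show "r e * \<bar>g e\<bar> powr p \<le> rm * N powr p"
      using r[of e] bound[of e] \<open>p > 0\<close> by (intro mult_mono powr_mono2) auto
  qed
  finally have "energy p Ed r g \<le> (1 / p) * (card S * (rm * N powr p))"
    unfolding energy_def using \<open>p > 0\<close> by (intro mult_left_mono) auto
  then show ?thesis by (simp add: mult.assoc)
qed

lemma optimal_energy_le:
  assumes graph: "oriented_graph V Ed" and conn: "connected_graph V Ed"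
    and rpos: "\<forall>e\<in>Ed. r e > 0" and bsum: "(\<Sum>i\<in>V. b i) = 0" and "p > 0"
    and opt: "\<forall>g. is_b_flow V Ed b g \<longrightarrow> energy p Ed r f \<le> energy p Ed r g"
  shows "energy p Ed r f \<le> (1 / p) * card V * r_inf Ed r * norm1 V b powr p"
proof -
  obtain S g where S: "S \<subseteq> Ed" "card S \<le> card V" and g: "is_b_flow V Ed b g"
    and supp: "\<forall>e. e \<notin> S \<longrightarrow> g e = 0" and bound: "\<forall>e. \<bar>g e\<bar> \<le> norm1 V b"
    using ex_b_flow_small_support[OF graph conn bsum] by blast
  have finE: "finite Ed" using graph by (rule oriented_graph_finite_edges)
  have r_le: "r e \<le> r_inf Ed r" if "e \<in> Ed" for e
    using finE that by (simp add: r_inf_def)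
  have "energy p Ed r f \<le> energy p Ed r g" using opt g by blast
  also have "\<dots> \<le> (1 / p) * card S * r_inf Ed r * norm1 V b powr p"
  proof (rule energy_le_card_support[OF finE \<open>p > 0\<close> S(1)])
    show "0 \<le> r e \<and> r e \<le> r_inf Ed r" if "e \<in> S" for e
      using that S(1) rpos r_le by (meson less_imp_le subsetD)
  qed (use supp bound in blast)+
  also have "\<dots> \<le> (1 / p) * card V * r_inf Ed r * norm1 V b powr p"
  proof (cases "Ed = {}")
    case True
    then show ?thesis using g by (simp add: norm1_eq_0_if_no_edges)
  next
    case False
    then obtain e where "e \<in> Ed" by blast
    then have "0 \<le> r_inf Ed r" using rpos r_le by (meson less_le_trans less_imp_le)
    then show ?thesis using S(2) \<open>p > 0\<close> by (intro mult_right_mono mult_left_mono) auto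
  qed
  finally show ?thesis .
qed

lemma r_ratio_nonneg:
  assumes "finite Ed" "e \<in> Ed" and rpos: "\<forall>e\<in>Ed. r e > 0"
  shows "0 \<le> r_ratio Ed r"
proof -
  have "0 < r e" "r e \<le> Max (r ` Ed)" using assms by auto
  moreover have "0 < Min (r ` Ed)" using assms by (subst Min_gr_iff) auto
  ultimately show ?thesis unfolding r_ratio_def by (intro divide_nonneg_nonneg) linarith+
qed

lemma r_inf_div_le_r_ratio:
  assumes "finite Ed" "e \<in> Ed" and rpos: "\<forall>e\<in>Ed. r e > 0"
  shows "r_inf Ed r / r e \<le> r_ratio Ed r"
proof -
  have "r e \<le> r_inf Ed r" "Min (r ` Ed) \<le> r e" using assms by (auto simp: r_inf_def)
  moreover have "0 < Min (r ` Ed)" using assms by (subst Min_gr_iff) auto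
  ultimately show ?thesis
    using rpos \<open>e \<in> Ed\<close> unfolding r_ratio_def r_inf_def[symmetric]
    by (auto intro!: divide_left_mono)
qed

lemma abs_flow_le_of_energy_le:
  assumes "finite Ed" "e \<in> Ed" and rpos: "\<forall>e\<in>Ed. r e > 0" and "p > 0" "n \<ge> 0" "N \<ge> 0"
    and energy: "energy p Ed r f \<le> (1 / p) * n * r_inf Ed r * N powr p"
  shows "\<bar>f e\<bar> \<le> (n * r_ratio Ed r) powr (1 / p) * N"
proof -
  have "r e > 0" using rpos \<open>e \<in> Ed\<close> by blast
  have "r e * \<bar>f e\<bar> powr p \<le> (\<Sum>e\<in>Ed. r e * \<bar>f e\<bar> powr p)"
    using assms(1,2) rpos by (intro member_le_sum) (auto simp: less_imp_le)
  also have "\<dots> = p * energy p Ed r f" using \<open>p > 0\<close> by (simp add: energy_def)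
  also have "\<dots> \<le> n * r_inf Ed r * N powr p" using energy \<open>p > 0\<close> by (simp add: field_simps)
  finally have "\<bar>f e\<bar> powr p \<le> n * (r_inf Ed r / r e) * N powr p"
    using \<open>r e > 0\<close> by (simp add: field_simps)
  also have "\<dots> \<le> n * r_ratio Ed r * N powr p"
    using r_inf_div_le_r_ratio[OF assms(1-3)] \<open>n \<ge> 0\<close> by (intro mult_right_mono mult_left_mono) auto
  finally have "(\<bar>f e\<bar> powr p) powr (1 / p) \<le> (n * r_ratio Ed r * N powr p) powr (1 / p)"
    using \<open>p > 0\<close> by (intro powr_mono2) auto
  moreover have "0 \<le> r_ratio Ed r" using r_ratio_nonneg[OF assms(1-3)] .
  ultimately show ?thesis
    using \<open>p > 0\<close> \<open>n \<ge> 0\<close> \<open>N \<ge> 0\<close> by (simp add: powr_powr powr_mult)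
qed

lemma abs_potential_diff_eq:
  fixes r f p d :: real
  assumes "r > 0" "r * f * \<bar>f\<bar> powr (p - 2) = d"
  shows "\<bar>d\<bar> = r * \<bar>f\<bar> powr (p - 1)"
proof -
  have "\<bar>f\<bar> * \<bar>f\<bar> powr (p - 2) = \<bar>f\<bar> powr (p - 1)"
    by (cases "f = 0") (simp_all add: powr_mult_base)
  with assms show ?thesis by (auto simp: abs_mult)
qed

theorem mainTheorem18:
  fixes V :: "'a set" and Ed :: "('a \<times> 'a) set"
    and r :: "'a \<times> 'a \<Rightarrow> real" and b :: "'a \<Rightarrow> real"
    and p :: real and fstar :: "'a \<times> 'a \<Rightarrow> real" and xstar :: "'a \<Rightarrow> real"
  assumes graph: "oriented_graph V Ed"
    and conn: "connected_graph V Ed"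
    and rpos: "\<forall>e\<in>Ed. r e > 0"
    and bsum: "(\<Sum>i\<in>V. b i) = 0"
    and p1: "p > 1"
    and fflow: "is_b_flow V Ed b fstar"
    and fopt: "\<forall>g. is_b_flow V Ed b g \<longrightarrow> energy p Ed r fstar \<le> energy p Ed r g"
    and xopt: "\<forall>x. dual_obj p V Ed r b x \<le> dual_obj p V Ed r b xstar"
    and kkt: "\<forall>(i, j)\<in>Ed. r (i, j) * fstar (i, j) * \<bar>fstar (i, j)\<bar> powr (p - 2) = xstar i - xstar j"
  shows "energy p Ed r fstar \<le> (1 / p) * real (card V) * r_inf Ed r * norm1 V b powr p
    \<and> (\<forall>(i, j)\<in>Ed. \<bar>fstar (i, j)\<bar> \<le> (real (card V) * r_ratio Ed r) powr (1 / p) * norm1 V b)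
    \<and> (\<forall>(i, j)\<in>Ed. \<bar>xstar i - xstar j\<bar>
          \<le> r (i, j) * (real (card V) * r_ratio Ed r) powr ((p - 1) / p) * norm1 V b powr (p - 1))"
proof -
  have finE: "finite Ed" using graph by (rule oriented_graph_finite_edges)
  have N: "0 \<le> norm1 V b" by (simp add: norm1_def sum_nonneg)
  have energy: "energy p Ed r fstar \<le> (1 / p) * card V * r_inf Ed r * norm1 V b powr p"
    using optimal_energy_le[OF graph conn rpos bsum _ fopt] p1 by simp
  have flow: "\<bar>fstar e\<bar> \<le> (card V * r_ratio Ed r) powr (1 / p) * norm1 V b" if "e \<in> Ed" for e
    using abs_flow_le_of_energy_le[OF finE that rpos _ _ N energy] p1 by simp
  have "\<bar>xstar i - xstar j\<bar> \<le> r (i, j) * (card V * r_ratio Ed r) powr ((p - 1) / p) * norm1 V b powr (p - 1)"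
    if "(i, j) \<in> Ed" for i j
  proof -
    have "0 \<le> r_ratio Ed r" using r_ratio_nonneg[OF finE that rpos] .
    have "\<bar>xstar i - xstar j\<bar> = r (i, j) * \<bar>fstar (i, j)\<bar> powr (p - 1)"
      using kkt that rpos by (intro abs_potential_diff_eq) auto
    also have "\<dots> \<le> r (i, j) * ((card V * r_ratio Ed r) powr (1 / p) * norm1 V b) powr (p - 1)"
      using flow[OF that] rpos that p1 by (intro mult_left_mono powr_mono2) auto
    also have "\<dots> = r (i, j) * (card V * r_ratio Ed r) powr ((p - 1) / p) * norm1 V b powr (p - 1)"
      using \<open>0 \<le> r_ratio Ed r\<close> N by (simp add: powr_mult powr_powr)
    finally show ?thesis .
  qed
  with energy flow show ?thesis by blast
qed

end
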